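(* Let $A>0$, $B\in\mathbb{R}$, $R\ge0$, and let $q_0=q_{0,R}$, where $q_{0,R}(x)=0$ for $x\le R$ and $q_{0,R}(x)=Ae^{2\mathrm{i} Bx}$ for $x>R$. Then the associated spectral functions are $$a_1(k)=1+\frac{A^2e^{4\mathrm{i} kR}}{4(k^2-B^2)},\qquad a_2(k)=1,\qquad b(k)=\frac{-\mathrm{i} Ae^{2\mathrm{i} R(k-B)}}{2(k-B)}.$$
   Context: Notation: $\sigma_3=\mathrm{diag}(1,-1)$, $X^{(i)}$ is the $i$-th column of $X$, $\mathbb{C}^\pm=\{\pm\mathrm{Im}\,k>0\}$. Let $U(x)=\begin{pmatrix}0&q_0(x)\\-\overline{q_0(-x)}&0\end{pmatrix}$, $U_+(x)=\begin{pmatrix}0&Ae^{2\mathrm{i} Bx}\\0&0\end{pmatrix}$, $U_-(x)=\begin{pmatrix}0&0\\-Ae^{2\mathrm{i} Bx}&0\end{pmatrix}$, $N_+(k)=\begin{pmatrix}1&\frac{-\mathrm{i} A}{2(k+B)}\\0&1\end{pmatrix}$, $N_-(k)=\begin{pmatrix}1&0\\\frac{-\mathrm{i} A}{2(k-B)}&1\end{pmatrix}$, $\Phi_\pm(x,k)=e^{\pm\mathrm{i} Bx\sigma_3}N_\pm(k)e^{-\mathrm{i}(k\pm B)x\sigma_3}$, $G_\pm(x,y,k)=\Phi_\pm(x,k)\Phi_\pm^{-1}(y,k)$. Let $\Psi_1,\Psi_2$ solve $\Psi_1(x,k)=e^{-\mathrm{i} Bx\sigma_3}N_-(k)+\int_{-\infty}^xG_-(x,y,k)(U-U_-)(y)\Psi_1(y,k)e^{\mathrm{i}(k-B)(x-y)\sigma_3}dy$,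 $\Psi_2(x,k)=e^{\mathrm{i} Bx\sigma_3}N_+(k)-\int_x^\infty G_+(x,y,k)(U-U_+)(y)\Psi_2(y,k)e^{\mathrm{i}(k+B)(x-y)\sigma_3}dy$. The spectral functions are $a_1(k)=\det(\Psi_1^{(1)}(0,k),\Psi_2^{(2)}(0,k))$, $a_2(k)=\det(\Psi_2^{(1)}(0,k),\Psi_1^{(2)}(0,k))$, $b(k)=\det(\Psi_2^{(1)}(0,k),\Psi_1^{(1)}(0,k))$ (on their natural domains, $k\in\overline{\mathbb{C}^+}\setminus\{\pm B\}$, $k\in\overline{\mathbb{C}^-}$, $k\in\mathbb{R}\setminus\{B\}$ respectively). *)

theory Defs
  imports "HOL-Analysis.Analysis"
begin

type_synonym cmat = "complex^2^2"

definition mat2 :: "complex \<Rightarrow> complex \<Rightarrow> complex \<Rightarrow> complex \<Rightarrow> cmat" where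
  "mat2 a b c d = vector [vector [a, b], vector [c, d]]"

definition exp_i_sigma3 :: "complex \<Rightarrow> cmat" where
  "exp_i_sigma3 t = mat2 (exp (\<i> * t)) 0 0 (exp (- \<i> * t))"

definition q0R :: "real \<Rightarrow> real \<Rightarrow> real \<Rightarrow> real \<Rightarrow> complex" where
  "q0R A B R x = (if x \<le> R then 0 else of_real A * exp (2 * \<i> * of_real B * of_real x))"

definition Umat :: "(real \<Rightarrow> complex) \<Rightarrow> real \<Rightarrow> cmat" where
  "Umat q x = mat2 0 (q x) (- cnj (q (- x))) 0"

definition Uplus :: "real \<Rightarrow> real \<Rightarrow> real \<Rightarrow> cmat" where
  "Uplus A B x = mat2 0 (of_real A * exp (2 * \<i> * of_real B * of_real x)) 0 0"

definition Uminus :: "real \<Rightarrow> real \<Rightarrow> real \<Rightarrow> cmat" where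
  "Uminus A B x = mat2 0 0 (- of_real A * exp (2 * \<i> * of_real B * of_real x)) 0"

definition Nplus :: "real \<Rightarrow> real \<Rightarrow> complex \<Rightarrow> cmat" where
  "Nplus A B k = mat2 1 (- \<i> * of_real A / (2 * (k + of_real B))) 0 1"

definition Nminus :: "real \<Rightarrow> real \<Rightarrow> complex \<Rightarrow> cmat" where
  "Nminus A B k = mat2 1 0 (- \<i> * of_real A / (2 * (k - of_real B))) 1"

definition Phiplus :: "real \<Rightarrow> real \<Rightarrow> real \<Rightarrow> complex \<Rightarrow> cmat" where
  "Phiplus A B x k = exp_i_sigma3 (of_real B * of_real x) ** Nplus A B k
     ** exp_i_sigma3 (- (k + of_real B) * of_real x)"

definition Phiminus :: "real \<Rightarrow> real \<Rightarrow> real \<Rightarrow> complex \<Rightarrow> cmat" where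
  "Phiminus A B x k = exp_i_sigma3 (- of_real B * of_real x) ** Nminus A B k
     ** exp_i_sigma3 (- (k - of_real B) * of_real x)"

definition Gplus :: "real \<Rightarrow> real \<Rightarrow> real \<Rightarrow> real \<Rightarrow> complex \<Rightarrow> cmat" where
  "Gplus A B x y k = Phiplus A B x k ** matrix_inv (Phiplus A B y k)"

definition Gminus :: "real \<Rightarrow> real \<Rightarrow> real \<Rightarrow> real \<Rightarrow> complex \<Rightarrow> cmat" where
  "Gminus A B x y k = Phiminus A B x k ** matrix_inv (Phiminus A B y k)"

definition solves_Psi1 :: "(real \<Rightarrow> complex) \<Rightarrow> real \<Rightarrow> real \<Rightarrow> complex \<Rightarrow> (real \<Rightarrow> cmat) \<Rightarrow> bool" where
  "solves_Psi1 q A B k Psi \<longleftrightarrow> (\<forall>x::real. \<exists>I.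
     ((\<lambda>y. Gminus A B x y k ** (Umat q y - Uminus A B y) ** Psi y
           ** exp_i_sigma3 ((k - of_real B) * of_real (x - y))) has_integral I) {..x}
     \<and> Psi x = exp_i_sigma3 (- of_real B * of_real x) ** Nminus A B k + I)"

definition solves_Psi2 :: "(real \<Rightarrow> complex) \<Rightarrow> real \<Rightarrow> real \<Rightarrow> complex \<Rightarrow> (real \<Rightarrow> cmat) \<Rightarrow> bool" where
  "solves_Psi2 q A B k Psi \<longleftrightarrow> (\<forall>x::real. \<exists>I.
     ((\<lambda>y. Gplus A B x y k ** (Umat q y - Uplus A B y) ** Psi y
           ** exp_i_sigma3 ((k + of_real B) * of_real (x - y))) has_integral I) {x..}
     \<and> Psi x = exp_i_sigma3 (of_real B * of_real x) ** Nplus A B k - I)"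

definition det_cols :: "complex^2 \<Rightarrow> complex^2 \<Rightarrow> complex" where
  "det_cols u v = det (\<chi> i j. if j = 1 then u $ i else v $ i)"

definition a1 :: "cmat \<Rightarrow> cmat \<Rightarrow> complex" where
  "a1 P1 P2 = det_cols (column 1 P1) (column 2 P2)"

definition a2 :: "cmat \<Rightarrow> cmat \<Rightarrow> complex" where
  "a2 P1 P2 = det_cols (column 1 P2) (column 2 P1)"

definition bfun :: "cmat \<Rightarrow> cmat \<Rightarrow> complex" where
  "bfun P1 P2 = det_cols (column 1 P2) (column 1 P1)"

end

theory Submission
  imports Defs
begin

text \<open>On the half-line y \<le> R the perturbation U - U_- lives in the (2,1) entry and G_- is
lower triangular, so the Volterra equation for Psi1 leaves the first row of the free solution
e^(-iBx sigma_3) N_- untouched for x \<le> R. At x = 0 the only correction is then in the (2,1)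
entry: there the potential equals A e^(2iBy) on [-R, 0] and cancels against U_- below -R, so the
correction is the elementary integral of A e^(-2i(k-B)y) over [-R, 0]. Mirroring this on
y \<ge> -R, where U - U_+ lives in the (1,2) entry and G_+ is upper triangular, Psi2(0) differs
from N_+ only in its (1,2) entry.\<close>

lemma mat2_nth [simp]:
  "mat2 a b c d $ 1 $ 1 = a" "mat2 a b c d $ 1 $ 2 = b"
  "mat2 a b c d $ 2 $ 1 = c" "mat2 a b c d $ 2 $ 2 = d"
  by (simp_all add: mat2_def)

lemma cmat_eq_iff:
  "(M::cmat) = N \<longleftrightarrow> M$1$1 = N$1$1 \<and> M$1$2 = N$1$2 \<and> M$2$1 = N$2$1 \<and> M$2$2 = N$2$2"
  by (auto simp: vec_eq_iff forall_2)

lemma cmat_eq_mat2: "(M::cmat) = mat2 (M$1$1) (M$1$2) (M$2$1) (M$2$2)"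
  by (simp add: cmat_eq_iff)

lemma mat2_mult:
  "mat2 a b c d ** mat2 e f g h = mat2 (a*e + b*g) (a*f + b*h) (c*e + d*g) (c*f + d*h)"
  by (simp add: cmat_eq_iff matrix_matrix_mult_def sum_2)

lemma mat2_diff: "mat2 a b c d - mat2 e f g h = mat2 (a - e) (b - f) (c - g) (d - h)"
  by (simp add: cmat_eq_iff)

lemma mat_1_eq_mat2: "mat 1 = mat2 1 0 0 1"
  by (simp add: cmat_eq_iff mat_def)

lemma column_nth [simp]: "column j M $ i = M $ i $ j"
  by (simp add: column_def)

lemma det_cols_2: "det_cols u v = u$1 * v$2 - v$1 * u$2"
  by (simp add: det_cols_def det_2)

lemma matrix_inv_eqI:
  fixes A B :: "'a::semiring_1^'n^'n"
  assumes "A ** B = mat 1" and "B ** A = mat 1"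
  shows "matrix_inv A = B"
proof -
  have "A ** matrix_inv A = mat 1 \<and> matrix_inv A ** A = mat 1"
    unfolding matrix_inv_def using assms by (rule someI[of _ B, OF conjI])
  then have "matrix_inv A = matrix_inv A ** (A ** B)" and "matrix_inv A ** A = mat 1"
    using assms by simp_all
  then show ?thesis by (simp add: matrix_mul_assoc)
qed

lemma matrix_inv_mat2:
  assumes "a*d - b*c = 1"
  shows "matrix_inv (mat2 a b c d) = mat2 d (-b) (-c) a"
  by (rule matrix_inv_eqI) (use assms in \<open>simp_all add: mat2_mult mat_1_eq_mat2 algebra_simps\<close>)

lemma has_integral_matrix_entry:
  fixes g :: "'a::euclidean_space \<Rightarrow> 'b::real_normed_vector^'n^'m"
  assumes "(g has_integral I) S"
  shows "((\<lambda>z. g z $ i $ j) has_integral I $ i $ j) S"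
proof -
  have "bounded_linear (\<lambda>M::'b^'n^'m. M $ i $ j)"
    by (rule bounded_linear_compose[OF bounded_linear_vec_nth bounded_linear_vec_nth])
  from has_integral_linear[OF assms this] show ?thesis by (simp add: o_def)
qed

lemma matrix_entry_of_integral_eq_0:
  fixes g :: "'a::euclidean_space \<Rightarrow> 'b::real_normed_vector^'n^'m"
  assumes "(g has_integral I) S" and "\<And>z. z \<in> S \<Longrightarrow> g z $ i $ j = 0"
  shows "I $ i $ j = 0"
proof -
  have "((\<lambda>z. g z $ i $ j) has_integral 0) S"
    by (rule has_integral_eq[OF _ has_integral_0]) (use assms(2) in simp)
  with has_integral_matrix_entry[OF assms(1)] show ?thesis
    by (rule has_integral_unique)
qed

lemma has_integral_mat2_mult:
  assumes "(f has_integral J) S"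
  shows "((\<lambda>y. mat2 (a * f y) (b * f y) (c * f y) (d * f y))
    has_integral mat2 (a * J) (b * J) (c * J) (d * J)) S"
proof -
  have "bounded_linear (\<lambda>z. mat2 (a * z) (b * z) (c * z) (d * z))"
    by (rule bounded_linearI') (simp_all add: cmat_eq_iff algebra_simps)
  from has_integral_linear[OF assms this] show ?thesis by (simp add: o_def)
qed

lemma has_integral_exp_complex:
  fixes a b :: real and c :: complex
  assumes "a \<le> b" and "c \<noteq> 0"
  shows "((\<lambda>y. exp (c * y)) has_integral (exp (c * b) - exp (c * a)) / c) {a..b}"
proof -
  have "((\<lambda>y. exp (c * y) / c) has_vector_derivative exp (c * x)) (at x within {a..b})" for x
  proof -
    have "((\<lambda>w. exp (c * w) / c) has_field_derivative exp (c * x)) (at (of_real x))"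
      using assms(2) by (auto intro!: derivative_eq_intros)
    then show ?thesis by (rule has_vector_derivative_real_field)
  qed
  from fundamental_theorem_of_calculus[OF assms(1) this] show ?thesis
    by (simp add: diff_divide_distrib)
qed

lemma Phiminus_mat2:
  "Phiminus A B x k = mat2 (exp (- \<i> * k * x)) 0
     (- \<i> * of_real A / (2 * (k - of_real B)) * exp (\<i> * (2 * B - k) * x)) (exp (\<i> * k * x))"
  unfolding Phiminus_def exp_i_sigma3_def Nminus_def mat2_mult
  by (simp add: cmat_eq_iff algebra_simps flip: exp_add)

lemma Phiplus_mat2:
  "Phiplus A B x k = mat2 (exp (- \<i> * k * x))
     (- \<i> * of_real A / (2 * (k + of_real B)) * exp (\<i> * (2 * B + k) * x)) 0 (exp (\<i> * k * x))"
  unfolding Phiplus_def exp_i_sigma3_def Nplus_def mat2_mult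
  by (simp add: cmat_eq_iff algebra_simps flip: exp_add)

lemma Gminus_entries:
  "Gminus A B x y k $ 1 $ 2 = 0" "Gminus A B x y k $ 2 $ 2 = exp (\<i> * k * (x - y))"
proof -
  have "matrix_inv (Phiminus A B y k)
      = mat2 (exp (\<i> * k * y)) 0 (- Phiminus A B y k $ 2 $ 1) (exp (- \<i> * k * y))"
    unfolding Phiminus_mat2 mat2_nth by (subst matrix_inv_mat2) (simp_all flip: exp_add)
  then show "Gminus A B x y k $ 1 $ 2 = 0" "Gminus A B x y k $ 2 $ 2 = exp (\<i> * k * (x - y))"
    by (simp_all add: Gminus_def Phiminus_mat2 mat2_mult algebra_simps flip: exp_add)
qed

lemma Gplus_entries:
  "Gplus A B x y k $ 2 $ 1 = 0" "Gplus A B x y k $ 1 $ 1 = exp (- \<i> * k * (x - y))"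
proof -
  have "matrix_inv (Phiplus A B y k)
      = mat2 (exp (\<i> * k * y)) (- Phiplus A B y k $ 1 $ 2) 0 (exp (- \<i> * k * y))"
    unfolding Phiplus_mat2 mat2_nth by (subst matrix_inv_mat2) (simp_all flip: exp_add)
  then show "Gplus A B x y k $ 2 $ 1 = 0" "Gplus A B x y k $ 1 $ 1 = exp (- \<i> * k * (x - y))"
    by (simp_all add: Gplus_def Phiplus_mat2 mat2_mult algebra_simps flip: exp_add)
qed

lemma Umat_q0R_minus_Uminus:
  assumes "y \<le> R"
  shows "Umat (q0R A B R) y - Uminus A B y
    = mat2 0 0 (if - R \<le> y then of_real A * exp (2 * \<i> * B * y) else 0) 0"
  using assms by (simp add: Umat_def Uminus_def q0R_def mat2_diff exp_cnj)

lemma Umat_q0R_minus_Uplus: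
  assumes "- R \<le> y"
  shows "Umat (q0R A B R) y - Uplus A B y
    = mat2 0 (if y \<le> R then - of_real A * exp (2 * \<i> * B * y) else 0) 0 0"
  using assms by (simp add: Umat_def Uplus_def q0R_def mat2_diff)

lemma lower_triangular_mult_mat2:
  assumes "G $ 1 $ 2 = 0"
  shows "G ** mat2 0 0 m 0 ** P ** exp_i_sigma3 t
    = mat2 0 0 (G$2$2 * m * P$1$1 * exp (\<i> * t)) (G$2$2 * m * P$1$2 * exp (- \<i> * t))"
  by (subst (1 2) cmat_eq_mat2) (simp add: assms exp_i_sigma3_def mat2_mult)

lemma upper_triangular_mult_mat2:
  assumes "G $ 2 $ 1 = 0"
  shows "G ** mat2 0 m 0 0 ** P ** exp_i_sigma3 t
    = mat2 (G$1$1 * m * P$2$1 * exp (\<i> * t)) (G$1$1 * m * P$2$2 * exp (- \<i> * t)) 0 0"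
  by (subst (1 2) cmat_eq_mat2) (simp add: assms exp_i_sigma3_def mat2_mult)

lemma solves_Psi1_has_integral:
  assumes "solves_Psi1 q A B k Psi"
  shows "((\<lambda>y. Gminus A B x y k ** (Umat q y - Uminus A B y) ** Psi y
           ** exp_i_sigma3 ((k - of_real B) * of_real (x - y)))
         has_integral Psi x - exp_i_sigma3 (- of_real B * of_real x) ** Nminus A B k) {..x}"
proof -
  from assms obtain I where
    "((\<lambda>y. Gminus A B x y k ** (Umat q y - Uminus A B y) ** Psi y
        ** exp_i_sigma3 ((k - of_real B) * of_real (x - y))) has_integral I) {..x}"
    and "Psi x = exp_i_sigma3 (- of_real B * of_real x) ** Nminus A B k + I"
    unfolding solves_Psi1_def by blast
  then show ?thesis by simp
qed

lemma solves_Psi2_has_integral: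
  assumes "solves_Psi2 q A B k Psi"
  shows "((\<lambda>y. Gplus A B x y k ** (Umat q y - Uplus A B y) ** Psi y
           ** exp_i_sigma3 ((k + of_real B) * of_real (x - y)))
         has_integral exp_i_sigma3 (of_real B * of_real x) ** Nplus A B k - Psi x) {x..}"
proof -
  from assms obtain I where
    "((\<lambda>y. Gplus A B x y k ** (Umat q y - Uplus A B y) ** Psi y
        ** exp_i_sigma3 ((k + of_real B) * of_real (x - y))) has_integral I) {x..}"
    and "Psi x = exp_i_sigma3 (of_real B * of_real x) ** Nplus A B k - I"
    unfolding solves_Psi2_def by blast
  then show ?thesis by simp
qed

lemma Psi1_first_row:
  assumes "solves_Psi1 (q0R A B R) A B k Psi" and "x \<le> R"
  shows "Psi x $ 1 $ 1 = exp (- \<i> * B * x)" and "Psi x $ 1 $ 2 = 0"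
proof -
  note integral = solves_Psi1_has_integral[OF assms(1), of x]
  have "(Psi x - exp_i_sigma3 (- of_real B * of_real x) ** Nminus A B k) $ 1 $ 1 = 0"
       "(Psi x - exp_i_sigma3 (- of_real B * of_real x) ** Nminus A B k) $ 1 $ 2 = 0"
    by (rule matrix_entry_of_integral_eq_0[OF integral],
        use assms(2) in \<open>simp add: Umat_q0R_minus_Uminus lower_triangular_mult_mat2 Gminus_entries\<close>)+
  then show "Psi x $ 1 $ 1 = exp (- \<i> * B * x)" and "Psi x $ 1 $ 2 = 0"
    by (simp_all add: exp_i_sigma3_def Nminus_def mat2_mult mult.assoc)
qed

lemma Psi1_at_zero:
  assumes "solves_Psi1 (q0R A B R) A B k Psi" and "0 \<le> R" and "k \<noteq> of_real B"
  shows "Psi 0 = mat2 1 0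
    (- \<i> * of_real A * exp (2 * \<i> * of_real R * (k - of_real B)) / (2 * (k - of_real B))) 1"
proof -
  define c where "c = - 2 * \<i> * (k - of_real B)"
  define h where "h y = (if y \<in> {-R..0} then of_real A * exp (c * y) else 0)" for y :: real
  define J where "J = of_real A * (1 - exp (c * of_real (- R))) / c"
  have "c \<noteq> 0" using assms(3) by (simp add: c_def)
  have integrand: "Gminus A B 0 y k ** (Umat (q0R A B R) y - Uminus A B y) ** Psi y
      ** exp_i_sigma3 ((k - of_real B) * of_real (0 - y)) = mat2 0 0 (h y) 0" if "y \<le> 0" for y
  proof -
    have "y \<le> R" using that assms(2) by simp
    moreover have "exp (\<i> * k * (0 - y)) * exp (2 * \<i> * B * y) * exp (- \<i> * B * y)
        * exp (\<i> * ((k - B) * (0 - y))) = exp (c * y)"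
      by (simp add: c_def algebra_simps flip: exp_add)
    ultimately show ?thesis using that
      by (simp add: h_def Umat_q0R_minus_Uminus lower_triangular_mult_mat2 Gminus_entries
          Psi1_first_row[OF assms(1)] mult_ac)
  qed
  have "((\<lambda>y. of_real A * exp (c * y)) has_integral J) {-R..0}"
    using has_integral_mult_right[OF has_integral_exp_complex[OF _ \<open>c \<noteq> 0\<close>, of "- R" 0]] assms(2)
    by (simp add: J_def)
  then have "(h has_integral J) {..0}"
    unfolding h_def by (subst has_integral_restrict) auto
  from has_integral_mat2_mult[OF this, of 0 0 1 0, simplified]
  have "((\<lambda>y. Gminus A B 0 y k ** (Umat (q0R A B R) y - Uminus A B y) ** Psi y
      ** exp_i_sigma3 ((k - of_real B) * of_real (0 - y))) has_integral mat2 0 0 J 0) {..0}"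
    by (rule has_integral_eq[rotated]) (simp only: atMost_iff integrand)
  with solves_Psi1_has_integral[OF assms(1), of 0]
  have "Psi 0 - exp_i_sigma3 (- of_real B * of_real 0) ** Nminus A B k = mat2 0 0 J 0"
    by (rule has_integral_unique)
  then have "Psi 0 = mat2 1 0 (- \<i> * of_real A / (2 * (k - of_real B)) + J) 1"
    by (simp add: diff_eq_eq eq_diff_eq cmat_eq_iff exp_i_sigma3_def Nminus_def mat2_mult)
  also have "- \<i> * of_real A / (2 * (k - of_real B)) + J
      = - \<i> * of_real A * exp (2 * \<i> * of_real R * (k - of_real B)) / (2 * (k - of_real B))"
  proof -
    have E: "exp (c * of_real (- R)) = exp (2 * \<i> * of_real R * (k - of_real B))"
      by (simp add: c_def algebra_simps)
    have "- \<i> * a / (2 * s) + a * (1 - E) / (- 2 * \<i> * s) = - \<i> * a * E / (2 * s)"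
      if "s \<noteq> 0" for a s E :: complex
      using that by (simp add: field_simps)
    from this[of "k - of_real B"] assms(3) show ?thesis
      unfolding J_def E unfolding c_def by simp
  qed
  finally show ?thesis .
qed

lemma Psi2_second_row:
  assumes "solves_Psi2 (q0R A B R) A B k Psi" and "- R \<le> x"
  shows "Psi x $ 2 $ 1 = 0" and "Psi x $ 2 $ 2 = exp (- \<i> * B * x)"
proof -
  note integral = solves_Psi2_has_integral[OF assms(1), of x]
  have "(exp_i_sigma3 (of_real B * of_real x) ** Nplus A B k - Psi x) $ 2 $ 1 = 0"
       "(exp_i_sigma3 (of_real B * of_real x) ** Nplus A B k - Psi x) $ 2 $ 2 = 0"
    by (rule matrix_entry_of_integral_eq_0[OF integral],
        use assms(2) in \<open>simp add: Umat_q0R_minus_Uplus upper_triangular_mult_mat2 Gplus_entries\<close>)+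
  then show "Psi x $ 2 $ 1 = 0" and "Psi x $ 2 $ 2 = exp (- \<i> * B * x)"
    by (simp_all add: exp_i_sigma3_def Nplus_def mat2_mult mult.assoc)
qed

lemma Psi2_at_zero:
  assumes "solves_Psi2 (q0R A B R) A B k Psi" and "0 \<le> R" and "k \<noteq> - of_real B"
  shows "Psi 0 = mat2 1
    (- \<i> * of_real A * exp (2 * \<i> * of_real R * (k + of_real B)) / (2 * (k + of_real B))) 0 1"
proof -
  define c where "c = 2 * \<i> * (k + of_real B)"
  define h where "h y = (if y \<in> {0..R} then - of_real A * exp (c * y) else 0)" for y :: real
  define J where "J = - of_real A * (exp (c * of_real R) - 1) / c"
  have "k + of_real B \<noteq> 0" using assms(3) by (simp add: add_eq_0_iff2)
  then have "c \<noteq> 0" by (simp add: c_def)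
  have integrand: "Gplus A B 0 y k ** (Umat (q0R A B R) y - Uplus A B y) ** Psi y
      ** exp_i_sigma3 ((k + of_real B) * of_real (0 - y)) = mat2 0 (h y) 0 0" if "0 \<le> y" for y
  proof -
    have "- R \<le> y" using that assms(2) by simp
    moreover have "exp (- \<i> * k * (0 - y)) * exp (2 * \<i> * B * y) * exp (- \<i> * B * y)
        * exp (- \<i> * ((k + B) * (0 - y))) = exp (c * y)"
      by (simp add: c_def algebra_simps flip: exp_add)
    ultimately show ?thesis using that
      by (simp add: h_def Umat_q0R_minus_Uplus upper_triangular_mult_mat2 Gplus_entries
          Psi2_second_row[OF assms(1)] mult_ac)
  qed
  have "((\<lambda>y. - of_real A * exp (c * y)) has_integral J) {0..R}"
    using has_integral_mult_right[OF has_integral_exp_complex[OF assms(2) \<open>c \<noteq> 0\<close>], of "- of_real A"]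
    by (simp add: J_def)
  then have "(h has_integral J) {0..}"
    unfolding h_def by (subst has_integral_restrict) auto
  from has_integral_mat2_mult[OF this, of 0 1 0 0, simplified]
  have "((\<lambda>y. Gplus A B 0 y k ** (Umat (q0R A B R) y - Uplus A B y) ** Psi y
      ** exp_i_sigma3 ((k + of_real B) * of_real (0 - y))) has_integral mat2 0 J 0 0) {0..}"
    by (rule has_integral_eq[rotated]) (simp only: atLeast_iff integrand)
  with solves_Psi2_has_integral[OF assms(1), of 0]
  have "exp_i_sigma3 (of_real B * of_real 0) ** Nplus A B k - Psi 0 = mat2 0 J 0 0"
    by (rule has_integral_unique)
  then have "Psi 0 = mat2 1 (- \<i> * of_real A / (2 * (k + of_real B)) - J) 0 1"
    by (simp add: diff_eq_eq eq_diff_eq cmat_eq_iff exp_i_sigma3_def Nplus_def mat2_mult)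
  also have "- \<i> * of_real A / (2 * (k + of_real B)) - J
      = - \<i> * of_real A * exp (2 * \<i> * of_real R * (k + of_real B)) / (2 * (k + of_real B))"
  proof -
    have E: "exp (c * of_real R) = exp (2 * \<i> * of_real R * (k + of_real B))"
      by (simp add: c_def algebra_simps)
    have "- \<i> * a / (2 * s) - - a * (E - 1) / (2 * \<i> * s) = - \<i> * a * E / (2 * s)"
      if "s \<noteq> 0" for a s E :: complex
      using that by (simp add: field_simps)
    from this[of "k + of_real B"] \<open>k + of_real B \<noteq> 0\<close> show ?thesis
      unfolding J_def E unfolding c_def by simp
  qed
  finally show ?thesis .
qed

theorem proposition4:
  fixes A B R :: real and k :: complex and Psi1 Psi2 :: "real \<Rightarrow> complex^2^2"
  assumes "A > 0" and "R \<ge> 0"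
    and "k \<noteq> of_real B" and "k \<noteq> - of_real B"
    and "solves_Psi1 (q0R A B R) A B k Psi1"
    and "solves_Psi2 (q0R A B R) A B k Psi2"
  shows "(Im k \<ge> 0 \<longrightarrow> a1 (Psi1 0) (Psi2 0)
            = 1 + (of_real A)^2 * exp (4 * \<i> * k * of_real R) / (4 * (k^2 - (of_real B)^2)))
       \<and> (Im k \<le> 0 \<longrightarrow> a2 (Psi1 0) (Psi2 0) = 1)
       \<and> (Im k = 0 \<longrightarrow> bfun (Psi1 0) (Psi2 0)
            = - \<i> * of_real A * exp (2 * \<i> * of_real R * (k - of_real B)) / (2 * (k - of_real B)))"
proof -
  have "k - of_real B \<noteq> 0" and "k + of_real B \<noteq> 0"
    using assms(3,4) by (auto simp: add_eq_0_iff2)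
  moreover have "exp (2 * \<i> * of_real R * (k - of_real B)) * exp (2 * \<i> * of_real R * (k + of_real B))
      = exp (4 * \<i> * k * of_real R)"
    by (simp add: algebra_simps flip: exp_add)
  ultimately have "a1 (Psi1 0) (Psi2 0)
      = 1 + (of_real A)^2 * exp (4 * \<i> * k * of_real R) / (4 * (k^2 - (of_real B)^2))"
    unfolding a1_def det_cols_2 column_nth Psi1_at_zero[OF assms(5,2,3)] Psi2_at_zero[OF assms(6,2,4)]
    by (simp add: field_simps power2_eq_square)
  then show ?thesis
    unfolding a2_def bfun_def det_cols_2 column_nth
      Psi1_at_zero[OF assms(5,2,3)] Psi2_at_zero[OF assms(6,2,4)]
    by simp
qed

end
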